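(* Let $n\geq 2$, $1\leq k\leq n-1$ and $w=w_1\cdots w_n\in\mathfrak{S}_n$. Let $\gamma=w_i\cdots w_j$ and $\delta=w_{i'}\cdots w_{j'}$ each be a maximal $k$-ascending section or a maximal $k$-descending section of $w$. If $j<i'$, then there is a $k$-up or a $k$-down in $w_jw_{j+1}\cdots w_{i'}$.
   Context: $\mathfrak{S}_n$ is the set of permutations $w=w_1\cdots w_n$ of $\{1,\dots,n\}$. A section of $w$ is a consecutive block $w_sw_{s+1}\cdots w_t$ ($s\le t$). A section $w_s\cdots w_t$ is a $k$-up if $s<t$ and $w_t-w_s\geq k$, and a $k$-down if $s<t$ and $w_s-w_t\geq k$; a $k$-up/$k$-down "in" $w_a\cdots w_b$ means one $w_s\cdots w_t$ with $a\le s<t\le b$. A section $w_i\cdots w_j$ ($i<j$) is $k$-ascending if $w_i=\min\{w_i,\dots,w_j\}$, $w_j=\max\{w_i,\dots,w_j\}$, $w_j-w_i\geq k$, and there is no $k$-down in $w_i\cdots w_j$. It is $k$-descending if $w_i=\max\{w_i,\dots,w_j\}$, $w_j=\min\{w_i,\dots,w_j\}$, $w_i-w_j\geq k$, and there is no $k$-up in $w_i\cdots w_j$. A $k$-ascending (resp. $k$-descending) section is maximal if it is not contained in another $k$-ascending (resp. $k$-descending) section. *)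

theory Defs
  imports Main
begin

text \<open>A permutation w = w_1 ... w_n of {1..n} is modelled as a function
  w :: nat => nat that is a bijection from {1..n} onto {1..n};
  positions are 1-based, values outside {1..n} are irrelevant.\<close>

definition is_perm :: "nat \<Rightarrow> (nat \<Rightarrow> nat) \<Rightarrow> bool" where
  "is_perm n w \<longleftrightarrow> bij_betw w {1..n} {1..n}"

definition k_up :: "(nat \<Rightarrow> nat) \<Rightarrow> nat \<Rightarrow> nat \<Rightarrow> nat \<Rightarrow> bool" where
  "k_up w k s t \<longleftrightarrow> s < t \<and> int (w t) - int (w s) \<ge> int k"

definition k_down :: "(nat \<Rightarrow> nat) \<Rightarrow> nat \<Rightarrow> nat \<Rightarrow> nat \<Rightarrow> bool" where
  "k_down w k s t \<longleftrightarrow> s < t \<and> int (w s) - int (w t) \<ge> int k"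

definition has_k_up_in :: "(nat \<Rightarrow> nat) \<Rightarrow> nat \<Rightarrow> nat \<Rightarrow> nat \<Rightarrow> bool" where
  "has_k_up_in w k a b \<longleftrightarrow> (\<exists>s t. a \<le> s \<and> s < t \<and> t \<le> b \<and> k_up w k s t)"

definition has_k_down_in :: "(nat \<Rightarrow> nat) \<Rightarrow> nat \<Rightarrow> nat \<Rightarrow> nat \<Rightarrow> bool" where
  "has_k_down_in w k a b \<longleftrightarrow> (\<exists>s t. a \<le> s \<and> s < t \<and> t \<le> b \<and> k_down w k s t)"

definition k_ascending :: "nat \<Rightarrow> (nat \<Rightarrow> nat) \<Rightarrow> nat \<Rightarrow> nat \<Rightarrow> nat \<Rightarrow> bool" where
  "k_ascending n w k i j \<longleftrightarrow> 1 \<le> i \<and> i < j \<and> j \<le> n \<and>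
     w i = Min (w ` {i..j}) \<and> w j = Max (w ` {i..j}) \<and>
     int (w j) - int (w i) \<ge> int k \<and> \<not> has_k_down_in w k i j"

definition k_descending :: "nat \<Rightarrow> (nat \<Rightarrow> nat) \<Rightarrow> nat \<Rightarrow> nat \<Rightarrow> nat \<Rightarrow> bool" where
  "k_descending n w k i j \<longleftrightarrow> 1 \<le> i \<and> i < j \<and> j \<le> n \<and>
     w i = Max (w ` {i..j}) \<and> w j = Min (w ` {i..j}) \<and>
     int (w i) - int (w j) \<ge> int k \<and> \<not> has_k_up_in w k i j"

definition max_k_ascending :: "nat \<Rightarrow> (nat \<Rightarrow> nat) \<Rightarrow> nat \<Rightarrow> nat \<Rightarrow> nat \<Rightarrow> bool" where
  "max_k_ascending n w k i j \<longleftrightarrow> k_ascending n w k i j \<and>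
     \<not> (\<exists>i' j'. i' \<le> i \<and> j \<le> j' \<and> (i', j') \<noteq> (i, j) \<and> k_ascending n w k i' j')"

definition max_k_descending :: "nat \<Rightarrow> (nat \<Rightarrow> nat) \<Rightarrow> nat \<Rightarrow> nat \<Rightarrow> nat \<Rightarrow> bool" where
  "max_k_descending n w k i j \<longleftrightarrow> k_descending n w k i j \<and>
     \<not> (\<exists>i' j'. i' \<le> i \<and> j \<le> j' \<and> (i', j') \<noteq> (i, j) \<and> k_descending n w k i' j')"

end

theory Submission
  imports Defs
begin

text \<open>Pass to the integer sequence f = w and the threshold K = k: a k-descending section
  of w is then a K-rising section of -f, and "no k-up and no k-down" becomes K-flatness,
  which is invariant under negation. Suppose the gap w_j ... w_i' were K-flat. Maximality of
  the left section forbids extending it to the right, so every value in the gap is dominated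
  by its endpoint value at j; likewise every value in the gap dominates the value at i' of
  the right section. Two sections of the same kind then fuse across the flat gap into a
  longer one, contradicting maximality; for sections of opposite kinds the two comparisons
  force w_j = w_i', contradicting injectivity.\<close>

definition rising :: "(nat \<Rightarrow> int) \<Rightarrow> int \<Rightarrow> nat \<Rightarrow> nat \<Rightarrow> bool" where
  "rising f K i j \<longleftrightarrow> i < j \<and> (\<forall>x\<in>{i..j}. f i \<le> f x \<and> f x \<le> f j) \<and> K \<le> f j - f i
     \<and> (\<forall>s t. i \<le> s \<longrightarrow> s < t \<longrightarrow> t \<le> j \<longrightarrow> f s - f t < K)"

definition flat :: "(nat \<Rightarrow> int) \<Rightarrow> int \<Rightarrow> nat \<Rightarrow> nat \<Rightarrow> bool" where
  "flat f K a b \<longleftrightarrow> (\<forall>s t. a \<le> s \<longrightarrow> s < t \<longrightarrow> t \<le> b \<longrightarrow> \<bar>f t - f s\<bar> < K)"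

definition max_rising :: "nat \<Rightarrow> (nat \<Rightarrow> int) \<Rightarrow> int \<Rightarrow> nat \<Rightarrow> nat \<Rightarrow> bool" where
  "max_rising n f K i j \<longleftrightarrow> 1 \<le> i \<and> j \<le> n \<and> rising f K i j \<and>
     \<not> (\<exists>i' j'. i' \<le> i \<and> j \<le> j' \<and> (i', j') \<noteq> (i, j) \<and> 1 \<le> i' \<and> j' \<le> n \<and> rising f K i' j')"

lemma risingI:
  assumes "i < j" and "\<And>x. i \<le> x \<Longrightarrow> x \<le> j \<Longrightarrow> f i \<le> f x \<and> f x \<le> f j"
    and "K \<le> f j - f i" and "\<And>s t. i \<le> s \<Longrightarrow> s < t \<Longrightarrow> t \<le> j \<Longrightarrow> f s - f t < K"
  shows "rising f K i j"
  using assms unfolding rising_def by auto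

lemma risingD:
  assumes "rising f K i j"
  shows rising_less: "i < j"
    and rising_bounds: "i \<le> x \<Longrightarrow> x \<le> j \<Longrightarrow> f i \<le> f x \<and> f x \<le> f j"
    and rising_height: "K \<le> f j - f i"
    and rising_no_drop: "i \<le> s \<Longrightarrow> s < t \<Longrightarrow> t \<le> j \<Longrightarrow> f s - f t < K"
  using assms unfolding rising_def by auto

lemma flatD: "flat f K a b \<Longrightarrow> a \<le> s \<Longrightarrow> s < t \<Longrightarrow> t \<le> b \<Longrightarrow> f t - f s < K \<and> f s - f t < K"
  unfolding flat_def by fastforce

lemma flat_uminus [simp]: "flat (\<lambda>x. - f x) K a b \<longleftrightarrow> flat f K a b"
  unfolding flat_def by (simp add: abs_minus_commute)

lemma rising_extend_right:
  assumes rise: "rising f K i j" and flat: "flat f K j b"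
    and "j < t" "t \<le> b" "f j < f t"
  shows "\<exists>t'\<in>{j<..b}. rising f K i t'"
proof -
  let ?S = "{j<..b}"
  obtain t' where t': "t' \<in> ?S" "f t' = Max (f ` ?S)"
    using Max_in[of "f ` ?S"] \<open>j < t\<close> \<open>t \<le> b\<close> by fastforce
  have max: "f x \<le> f t'" if "x \<in> ?S" for x
    using that t'(2) by simp
  have "f t \<le> f t'" using max \<open>j < t\<close> \<open>t \<le> b\<close> by simp
  with \<open>f j < f t\<close> have above: "f j < f t'" by simp
  have gap_close: "f j - f x < K" if "j < x" "x \<le> b" for x
    using flatD[OF flat order_refl that] by simp
  have "rising f K i t'"
  proof (rule risingI)
    show "i < t'" using rising_less[OF rise] t'(1) by simp
  next
    fix x assume x: "i \<le> x" "x \<le> t'"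
    show "f i \<le> f x \<and> f x \<le> f t'"
    proof (cases "x \<le> j")
      case True
      then show ?thesis using rising_bounds[OF rise x(1) True] above by simp
    next
      case False
      then show ?thesis
        using max[of x] gap_close[of x] rising_height[OF rise] x t'(1) by auto
    qed
  next
    show "K \<le> f t' - f i" using rising_height[OF rise] above by simp
  next
    fix s u assume su: "i \<le> s" "s < u" "u \<le> t'"
    show "f s - f u < K"
    proof (cases "u \<le> j")
      case True
      then show ?thesis using rising_no_drop[OF rise su(1,2)] by simp
    next
      case u: False
      show ?thesis
      proof (cases "j \<le> s")
        case True
        then show ?thesis using flatD[OF flat True su(2)] su t'(1) by simp
      next
        case False
        then show ?thesis
          using rising_bounds[OF rise su(1)] gap_close[of u] u su t'(1) by simp
      qed
    qed
  qed
  with t'(1) show ?thesis by blast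
qed

lemma rising_extend_left:
  assumes rise: "rising f K i j" and flat: "flat f K a i"
    and "a \<le> t" "t < i" "f t < f i"
  shows "\<exists>t'\<in>{a..<i}. rising f K t' j"
proof -
  let ?S = "{a..<i}"
  obtain t' where t': "t' \<in> ?S" "f t' = Min (f ` ?S)"
    using Min_in[of "f ` ?S"] \<open>a \<le> t\<close> \<open>t < i\<close> by fastforce
  have min: "f t' \<le> f x" if "x \<in> ?S" for x
    using that t'(2) by simp
  have "f t' \<le> f t" using min \<open>a \<le> t\<close> \<open>t < i\<close> by simp
  with \<open>f t < f i\<close> have below: "f t' < f i" by simp
  have gap_close: "f x - f i < K" if "a \<le> x" "x < i" for x
    using flatD[OF flat that order_refl] by simp
  have "rising f K t' j"
  proof (rule risingI)
    show "t' < j" using rising_less[OF rise] t'(1) by simp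
  next
    fix x assume x: "t' \<le> x" "x \<le> j"
    show "f t' \<le> f x \<and> f x \<le> f j"
    proof (cases "i \<le> x")
      case True
      then show ?thesis using rising_bounds[OF rise True x(2)] below by simp
    next
      case False
      then show ?thesis
        using min[of x] gap_close[of x] rising_height[OF rise] x t'(1) by auto
    qed
  next
    show "K \<le> f j - f t'" using rising_height[OF rise] below by simp
  next
    fix s u assume su: "t' \<le> s" "s < u" "u \<le> j"
    show "f s - f u < K"
    proof (cases "i \<le> s")
      case True
      then show ?thesis using rising_no_drop[OF rise True su(2,3)] by simp
    next
      case s: False
      show ?thesis
      proof (cases "u \<le> i")
        case True
        then show ?thesis using flatD[OF flat _ su(2) True] su t'(1) by simp
      next
        case False
        then show ?thesis
          using rising_bounds[OF rise _ su(3)] gap_close[of s] s su t'(1) by simp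
      qed
    qed
  qed
  with t'(1) show ?thesis by blast
qed

lemma rising_join:
  assumes left: "rising f K i j" and right: "rising f K i' j'" and "j < i'"
    and flat: "flat f K j i'"
    and between: "\<And>t. j \<le> t \<Longrightarrow> t \<le> i' \<Longrightarrow> f i' \<le> f t \<and> f t \<le> f j"
  shows "rising f K i j'"
proof -
  have step: "f j - f i' < K" using flatD[OF flat order_refl \<open>j < i'\<close> order_refl] by simp
  note heights = rising_height[OF left] rising_height[OF right]
  show ?thesis
  proof (rule risingI)
    show "i < j'" using rising_less[OF left] rising_less[OF right] \<open>j < i'\<close> by simp
  next
    fix x assume x: "i \<le> x" "x \<le> j'"
    consider "x \<le> j" | "j \<le> x" "x \<le> i'" | "i' \<le> x" by linarith
    then show "f i \<le> f x \<and> f x \<le> f j'"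
    proof cases
      case 1
      then show ?thesis using rising_bounds[OF left x(1)] step heights by fastforce
    next
      case 2
      then show ?thesis using between[of x] step heights by fastforce
    next
      case 3
      then show ?thesis using rising_bounds[OF right _ x(2)] step heights by fastforce
    qed
  next
    show "K \<le> f j' - f i" using step heights by simp
  next
    fix s u assume su: "i \<le> s" "s < u" "u \<le> j'"
    have s_below: "f s \<le> f j" if "s \<le> i'"
      using that rising_bounds[OF left su(1)] between[of s] by (cases "s \<le> j") auto
    have u_above: "f i' \<le> f u" if "j \<le> u"
      using that rising_bounds[OF right _ su(3)] between[of u] by (cases "i' \<le> u") auto
    consider "u \<le> j" | "i' \<le> s" | "j \<le> s" "u \<le> i'" | "s < j" "j < u" "u \<le> i'"
      | "j \<le> s" "s < i'" "i' < u" | "s < j" "i' < u"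
      by linarith
    then show "f s - f u < K"
    proof cases
      case 1
      then show ?thesis using rising_no_drop[OF left su(1,2)] by simp
    next
      case 2
      then show ?thesis using rising_no_drop[OF right _ su(2,3)] by simp
    next
      case 3
      then show ?thesis using flatD[OF flat _ su(2)] by simp
    next
      case 4
      then show ?thesis using flatD[OF flat order_refl, of u] s_below by simp
    next
      case 5
      then show ?thesis using flatD[OF flat _ _ order_refl, of s] u_above by simp
    next
      case 6
      then show ?thesis using s_below u_above step \<open>j < i'\<close> by simp
    qed
  qed
qed

lemma max_rising_dominates_right:
  assumes max: "max_rising n f K i j" and "flat f K j b" and "b \<le> n" and "j \<le> t" "t \<le> b"
  shows "f t \<le> f j"
proof (rule ccontr)
  assume "\<not> f t \<le> f j"
  with assms have "j < t" "f j < f t" by (auto simp: le_less)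
  with assms obtain t' where t': "j < t'" "t' \<le> b" "rising f K i t'"
    using rising_extend_right[of f K i j b t] unfolding max_rising_def by auto
  from max have "\<not> rising f K i t'" if "j < t'" "t' \<le> n" for t'
    using that unfolding max_rising_def by fastforce
  with t' \<open>b \<le> n\<close> show False by simp
qed

lemma max_rising_dominates_left:
  assumes max: "max_rising n f K i j" and "flat f K a i" and "1 \<le> a" and "a \<le> t" "t \<le> i"
  shows "f i \<le> f t"
proof (rule ccontr)
  assume "\<not> f i \<le> f t"
  with assms have "t < i" "f t < f i" by (auto simp: le_less)
  with assms obtain t' where t': "a \<le> t'" "t' < i" "rising f K t' j"
    using rising_extend_left[of f K i j a t] unfolding max_rising_def by auto
  from max have "\<not> rising f K t' j" if "1 \<le> t'" "t' < i" for t'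
    using that unfolding max_rising_def by (metis order.refl less_imp_le prod.inject less_irrefl)
  with t' \<open>1 \<le> a\<close> show False by simp
qed

lemma max_rising_gap_not_flat:
  assumes left: "max_rising n f K i j" and right: "max_rising n f K i' j'" and "j < i'"
  shows "\<not> flat f K j i'"
proof
  assume flat: "flat f K j i'"
  have bounds: "1 \<le> j" "i' \<le> n" "j' \<le> n" "i < j" "i' < j'"
    using left right rising_less unfolding max_rising_def by fastforce+
  have "rising f K i j'"
  proof (rule rising_join[OF _ _ \<open>j < i'\<close> flat])
    fix t assume "j \<le> t" "t \<le> i'"
    then show "f i' \<le> f t \<and> f t \<le> f j"
      using max_rising_dominates_left[OF right flat] max_rising_dominates_right[OF left flat]
        bounds by simp
  qed (use left right in \<open>auto simp: max_rising_def\<close>)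
  moreover from left have "\<not> rising f K i j'"
    using bounds \<open>j < i'\<close> unfolding max_rising_def
    by (metis order.refl less_imp_le prod.inject less_irrefl less_trans)
  ultimately show False by contradiction
qed

lemma max_rising_opposite_flat_gap:
  assumes left: "max_rising n f K i j" and right: "max_rising n (\<lambda>x. - f x) K i' j'"
    and "j < i'" and flat: "flat f K j i'"
  shows "f i' = f j"
proof -
  have "1 \<le> j" "i' \<le> n"
    using left right rising_less unfolding max_rising_def by fastforce+
  then have "f i' \<le> f j" "- f i' \<le> - f j"
    using max_rising_dominates_right[OF left flat] \<open>j < i'\<close>
      max_rising_dominates_left[OF right, of j j] flat by simp_all
  then show ?thesis by simp
qed

lemma not_has_k_down_in_iff:
  "\<not> has_k_down_in w k a b \<longleftrightarrow> (\<forall>s t. a \<le> s \<longrightarrow> s < t \<longrightarrow> t \<le> b \<longrightarrow> int (w s) - int (w t) < int k)"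
  unfolding has_k_down_in_def k_down_def by (meson not_le)

lemma not_has_k_up_in_iff:
  "\<not> has_k_up_in w k a b \<longleftrightarrow> (\<forall>s t. a \<le> s \<longrightarrow> s < t \<longrightarrow> t \<le> b \<longrightarrow> int (w t) - int (w s) < int k)"
  unfolding has_k_up_in_def k_up_def by (meson not_le)

lemma k_ascending_iff_rising:
  "k_ascending n w k i j \<longleftrightarrow> 1 \<le> i \<and> j \<le> n \<and> rising (\<lambda>x. int (w x)) (int k) i j"
proof (cases "i < j")
  case True
  then show ?thesis
    unfolding k_ascending_def rising_def not_has_k_down_in_iff
    by (auto simp: eq_Min_iff eq_Max_iff)
qed (simp add: k_ascending_def rising_def)

lemma k_descending_iff_rising:
  "k_descending n w k i j \<longleftrightarrow> 1 \<le> i \<and> j \<le> n \<and> rising (\<lambda>x. - int (w x)) (int k) i j"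
proof (cases "i < j")
  case True
  then show ?thesis
    unfolding k_descending_def rising_def not_has_k_up_in_iff
    by (auto simp: eq_Min_iff eq_Max_iff)
qed (simp add: k_descending_def rising_def)

lemma max_k_ascending_iff: "max_k_ascending n w k i j \<longleftrightarrow> max_rising n (\<lambda>x. int (w x)) (int k) i j"
  unfolding max_k_ascending_def max_rising_def k_ascending_iff_rising by blast

lemma max_k_descending_iff: "max_k_descending n w k i j \<longleftrightarrow> max_rising n (\<lambda>x. - int (w x)) (int k) i j"
  unfolding max_k_descending_def max_rising_def k_descending_iff_rising by blast

lemma flat_iff_no_k_up_down:
  "flat (\<lambda>x. int (w x)) (int k) a b \<longleftrightarrow> \<not> has_k_up_in w k a b \<and> \<not> has_k_down_in w k a b"
  unfolding flat_def not_has_k_up_in_iff not_has_k_down_in_iff abs_less_iff by auto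

theorem lemma2p7:
  fixes n k :: nat and w :: "nat \<Rightarrow> nat" and i j i' j' :: nat
  assumes "n \<ge> 2" and "1 \<le> k" and "k \<le> n - 1"
    and "is_perm n w"
    and "max_k_ascending n w k i j \<or> max_k_descending n w k i j"
    and "max_k_ascending n w k i' j' \<or> max_k_descending n w k i' j'"
    and "j < i'"
  shows "has_k_up_in w k j i' \<or> has_k_down_in w k j i'"
proof (rule ccontr)
  assume "\<not> ?thesis"
  then have flat: "flat (\<lambda>x. int (w x)) (int k) j i'" "flat (\<lambda>x. - int (w x)) (int k) j i'"
    by (simp_all add: flat_iff_no_k_up_down)
  have "1 \<le> j" "i' \<le> n"
    using assms(5,6) unfolding max_k_ascending_def max_k_descending_def
      k_ascending_def k_descending_def by auto
  moreover have "inj_on w {1..n}"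
    using assms(4) unfolding is_perm_def bij_betw_def by simp
  ultimately have "w i' \<noteq> w j"
    using \<open>j < i'\<close> inj_onD[of w "{1..n}" i' j] by fastforce
  from assms(5,6) show False
  proof (elim disjE)
    assume "max_k_ascending n w k i j" "max_k_ascending n w k i' j'"
    then show False
      using max_rising_gap_not_flat[OF _ _ \<open>j < i'\<close>] flat(1)
      unfolding max_k_ascending_iff by blast
  next
    assume "max_k_descending n w k i j" "max_k_descending n w k i' j'"
    then show False
      using max_rising_gap_not_flat[OF _ _ \<open>j < i'\<close>] flat(2)
      unfolding max_k_descending_iff by blast
  next
    assume "max_k_ascending n w k i j" "max_k_descending n w k i' j'"
    then have "int (w i') = int (w j)"
      using max_rising_opposite_flat_gap[OF _ _ \<open>j < i'\<close> flat(1)]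
      unfolding max_k_ascending_iff max_k_descending_iff by blast
    with \<open>w i' \<noteq> w j\<close> show False by simp
  next
    assume "max_k_descending n w k i j" "max_k_ascending n w k i' j'"
    then have "- int (w i') = - int (w j)"
      using max_rising_opposite_flat_gap[OF _ _ \<open>j < i'\<close> flat(2)]
      unfolding max_k_ascending_iff max_k_descending_iff by simp
    with \<open>w i' \<noteq> w j\<close> show False by simp
  qed
qed

end
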